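(* Let $f$ be a homeomorphism of a compact metric space $(X,d)$ and let $x\in X$ be a minimally expansive point of $f$ with expansivity constant $\mathfrak{c}>0$. Then for each $y\in B(x,\mathfrak{c})$ and each $0<\epsilon<\mathfrak{c}$ there exists $N\in\mathbb{N}$ such that for every pair $u,v\in\mathcal{O}_f(y)$ satisfying $d(f^n(u),f^n(v))<\mathfrak{c}$ for all $-N\le n\le N$, we have $d(u,v)<\epsilon$.
   Context: $B(x,\epsilon)=\{y: d(x,y)<\epsilon\}$, $\mathcal{O}_f(y)=\{f^n(y):n\in\mathbb{Z}\}$. $f$ is expansive on $A\subset X$ with expansivity constant $\mathfrak{c}$ if for all distinct $a,b\in A$ there is $n\in\mathbb{Z}$ with $d(f^n(a),f^n(b))>\mathfrak{c}$. A point $x$ is a minimally expansive point of $f$ with expansivity constant $\mathfrak{c}>0$ if for each $y\in B(x,\mathfrak{c})$, $f$ is expansive on $\overline{\mathcal{O}_f(y)}$ with expansivity constant $\mathfrak{c}$. *)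

theory Defs
  imports "HOL-Analysis.Analysis"
begin

definition zpow :: "('a \<Rightarrow> 'a) \<Rightarrow> int \<Rightarrow> 'a \<Rightarrow> 'a" where
  "zpow f n = (if 0 \<le> n then f ^^ nat n else inv f ^^ nat (- n))"

definition orbit :: "('a \<Rightarrow> 'a) \<Rightarrow> 'a \<Rightarrow> 'a set" where
  "orbit f y = {zpow f n y | n. True}"

definition expansive_on :: "('a::metric_space \<Rightarrow> 'a) \<Rightarrow> 'a set \<Rightarrow> real \<Rightarrow> bool" where
  "expansive_on f A c \<longleftrightarrow>
     (\<forall>a\<in>A. \<forall>b\<in>A. a \<noteq> b \<longrightarrow> (\<exists>n::int. dist (zpow f n a) (zpow f n b) > c))"

definition minimally_expansive_point :: "('a::metric_space \<Rightarrow> 'a) \<Rightarrow> 'a \<Rightarrow> real \<Rightarrow> bool" where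
  "minimally_expansive_point f x c \<longleftrightarrow> c > 0 \<and>
     (\<forall>y\<in>ball x c. expansive_on f (closure (orbit f y)) c)"

end

theory Submission
  imports Defs
begin

text \<open>If no \<open>N\<close> worked, there would be pairs \<open>u\<^sub>N, v\<^sub>N\<close> in the orbit that are
  \<open>\<epsilon>\<close>-apart yet \<open>c\<close>-close under \<open>f\<^sup>n\<close> for all \<open>|n| \<le> N\<close>. By compactness a
  subsequence converges to a pair \<open>u \<noteq> v\<close> in the closure of the orbit, and continuity of
  each \<open>f\<^sup>n\<close> gives \<open>d(f\<^sup>n u, f\<^sup>n v) \<le> c\<close> for every \<open>n\<close>, contradicting expansivity
  on the closure of the orbit.\<close>

lemma continuous_on_funpow:
  fixes h :: "'a::topological_space \<Rightarrow> 'a"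
  assumes "continuous_on UNIV h"
  shows "continuous_on UNIV (h ^^ k)"
proof (induction k)
  case 0
  show ?case by (simp add: id_def)
next
  case (Suc k)
  then show ?case
    using continuous_on_compose[of UNIV "h ^^ k" h] assms
    by (simp add: continuous_on_subset)
qed

lemma homeomorphism_UNIV_inv_eq:
  assumes "homeomorphism UNIV UNIV f g"
  shows "inv f = g"
  by (rule inv_equality) (use assms homeomorphism_apply1 homeomorphism_apply2 in blast)+

lemma continuous_on_zpow:
  assumes "homeomorphism UNIV UNIV f g"
  shows "continuous_on UNIV (zpow f n)"
proof -
  have "continuous_on UNIV f" "continuous_on UNIV (inv f)"
    using assms homeomorphism_UNIV_inv_eq[OF assms] by (auto simp: homeomorphism_def)
  then show ?thesis
    unfolding zpow_def by (simp add: continuous_on_funpow)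
qed

lemma dist_continuous_limit_le:
  assumes "continuous_on UNIV h"
    and "U \<longlonglongrightarrow> u" "V \<longlonglongrightarrow> v"
    and "eventually (\<lambda>k. dist (h (U k)) (h (V k)) \<le> c) sequentially"
  shows "dist (h u) (h v) \<le> c"
proof (rule tendsto_upperbound)
  show "((\<lambda>k. dist (h (U k)) (h (V k))) \<longlongrightarrow> dist (h u) (h v)) sequentially"
    using assms(1-3) by (intro tendsto_dist continuous_on_tendsto_compose[of UNIV h]) auto
qed (use assms(4) in simp_all)

lemma expansive_on_closure_uniform:
  fixes f :: "'a::metric_space \<Rightarrow> 'a"
  assumes "compact (closure A)"
    and cont: "\<And>n. continuous_on UNIV (zpow f n)"
    and "expansive_on f (closure A) c"
    and "0 < \<epsilon>"
  shows "\<exists>N::nat. \<forall>u\<in>A. \<forall>v\<in>A.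
           (\<forall>n::int. - int N \<le> n \<and> n \<le> int N \<longrightarrow> dist (zpow f n u) (zpow f n v) < c)
           \<longrightarrow> dist u v < \<epsilon>"
proof (rule ccontr)
  assume "\<not> ?thesis"
  then obtain U V where UV: "\<And>N. U N \<in> A" "\<And>N. V N \<in> A"
    and close: "\<And>N n. - int N \<le> n \<Longrightarrow> n \<le> int N \<Longrightarrow> dist (zpow f n (U N)) (zpow f n (V N)) < c"
    and apart: "\<And>N. \<epsilon> \<le> dist (U N) (V N)"
    by (metis not_less)
  have "seq_compact (closure A \<times> closure A)"
    using assms(1) by (intro compact_imp_seq_compact compact_Times)
  then obtain l r where l: "l \<in> closure A \<times> closure A" and r: "strict_mono r"
    and lim: "((\<lambda>k. (U k, V k)) \<circ> r) \<longlonglongrightarrow> l"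
    by (rule seq_compactE[where f="\<lambda>k. (U k, V k)"]) (use UV closure_subset in blast)
  obtain u v where uv: "l = (u, v)" by fastforce
  have lim_u: "(\<lambda>k. U (r k)) \<longlonglongrightarrow> u" and lim_v: "(\<lambda>k. V (r k)) \<longlonglongrightarrow> v"
    using tendsto_fst[OF lim] tendsto_snd[OF lim] by (simp_all add: uv o_def)
  have "\<epsilon> \<le> dist u v"
    using LIMSEQ_le_const[OF tendsto_dist[OF lim_u lim_v]] apart by auto
  with \<open>0 < \<epsilon>\<close> obtain n where n: "c < dist (zpow f n u) (zpow f n v)"
    using assms(3) l uv unfolding expansive_on_def by fastforce
  have "eventually (\<lambda>k. dist (zpow f n (U (r k))) (zpow f n (V (r k))) \<le> c) sequentially"
  proof (rule eventually_sequentiallyI)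
    fix k assume "nat \<bar>n\<bar> \<le> k"
    then have "nat \<bar>n\<bar> \<le> r k"
      using seq_suble[OF r, of k] by linarith
    then show "dist (zpow f n (U (r k))) (zpow f n (V (r k))) \<le> c"
      using close[of "r k" n] by linarith
  qed
  then have "dist (zpow f n u) (zpow f n v) \<le> c"
    using dist_continuous_limit_le[OF cont lim_u lim_v] by blast
  with n show False by simp
qed

theorem lemma2p6:
  fixes f :: "'a::metric_space \<Rightarrow> 'a" and x :: 'a and c :: real
  assumes "compact (UNIV :: 'a set)"
    and "homeomorphism UNIV UNIV f g"
    and "minimally_expansive_point f x c"
  shows "\<forall>y\<in>ball x c. \<forall>\<epsilon>. 0 < \<epsilon> \<and> \<epsilon> < c \<longrightarrow>
           (\<exists>N::nat. \<forall>u\<in>orbit f y. \<forall>v\<in>orbit f y.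
              (\<forall>n::int. - int N \<le> n \<and> n \<le> int N \<longrightarrow> dist (zpow f n u) (zpow f n v) < c)
              \<longrightarrow> dist u v < \<epsilon>)"
proof (intro ballI allI impI)
  fix y \<epsilon>
  assume "y \<in> ball x c" and "0 < \<epsilon> \<and> \<epsilon> < c"
  then have "expansive_on f (closure (orbit f y)) c" "0 < \<epsilon>"
    using assms(3) unfolding minimally_expansive_point_def by auto
  moreover have "compact (closure (orbit f y))"
    using closed_Int_compact[OF closed_closure assms(1)] by simp
  ultimately show "\<exists>N::nat. \<forall>u\<in>orbit f y. \<forall>v\<in>orbit f y.
      (\<forall>n::int. - int N \<le> n \<and> n \<le> int N \<longrightarrow> dist (zpow f n u) (zpow f n v) < c)
      \<longrightarrow> dist u v < \<epsilon>"
    using expansive_on_closure_uniform continuous_on_zpow[OF assms(2)] by blast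
qed

end
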